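(* Let $M$ be a completely regular Hausdorff space. Then the Stone–Čech compactification $\beta M$ of $M$ is homeomorphic to the Gelfand spectrum of the abelian $C^\ast$-algebra $C^{pt}(\mathcal{Q}(\mathcal{T}(M)))$. If, in particular, $M$ is discrete, then $\beta M$ is homeomorphic to $\mathcal{Q}(\mathcal{T}(M))$.
   Context: $\mathcal{T}(M)$ is the lattice of open subsets of $M$. A quasipoint of $\mathcal{T}(M)$ is a maximal dual ideal (maximal nonempty family of open sets not containing $\emptyset$, upward closed and closed under finite intersections); $\mathcal{Q}(\mathcal{T}(M))$ is the set of quasipoints with topology having base $\{\mathfrak{B}\mid U\in\mathfrak{B}\}$, $U\in\mathcal{T}(M)$. $\mathfrak{B}$ is over $x\in M$ if $x\in\bigcap_{U\in\mathfrak{B}}\overline{U}$ (at most one such $x$ since $M$ is Hausdorff); $\mathcal{Q}^{pt}(\mathcal{T}(M))$ is the set of quasipoints over some point, and $pt:\mathcal{Q}^{pt}(\mathcal{T}(M))\to M$ sends a quasipoint over $x$ to $x$. $C^{pt}(\mathcal{Q}(\mathcal{T}(M)))$ is the $C^\ast$-algebra of continuous functions $\mathcal{Q}(\mathcal{T}(M))\to\mathbb{C}$ that are constant on each fibre of $pt$. *)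

theory Defs
  imports "HOL-Analysis.Analysis"
begin

definition dual_ideal :: "'a topology \<Rightarrow> 'a set set \<Rightarrow> bool" where
  "dual_ideal M B \<longleftrightarrow>
     B \<noteq> {} \<and> (\<forall>U\<in>B. openin M U) \<and> {} \<notin> B \<and>
     (\<forall>U V. U \<in> B \<and> openin M V \<and> U \<subseteq> V \<longrightarrow> V \<in> B) \<and>
     (\<forall>U V. U \<in> B \<and> V \<in> B \<longrightarrow> U \<inter> V \<in> B)"

definition quasipoint :: "'a topology \<Rightarrow> 'a set set \<Rightarrow> bool" where
  "quasipoint M B \<longleftrightarrow> dual_ideal M B \<and> (\<forall>C. dual_ideal M C \<and> B \<subseteq> C \<longrightarrow> C = B)"

definition quasipoint_space :: "'a topology \<Rightarrow> 'a set set topology" where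
  "quasipoint_space M =
     topology_generated_by {{B. quasipoint M B \<and> U \<in> B} | U. openin M U}"

definition quasipoint_over :: "'a topology \<Rightarrow> 'a set set \<Rightarrow> 'a \<Rightarrow> bool" where
  "quasipoint_over M B x \<longleftrightarrow> quasipoint M B \<and> x \<in> topspace M \<and> (\<forall>U\<in>B. x \<in> M closure_of U)"

text \<open>C^pt(Q(T(M))): continuous complex functions on Q(T(M)) constant on the fibres of pt.
  Functions are normalised to be 0 outside the space so that equality of functions is
  equality as elements of the algebra.\<close>
definition Cpt :: "'a topology \<Rightarrow> ('a set set \<Rightarrow> complex) set" where
  "Cpt M = {f. continuous_map (quasipoint_space M) euclidean f \<and>
               (\<forall>B. B \<notin> topspace (quasipoint_space M) \<longrightarrow> f B = 0) \<and>
               (\<forall>x B1 B2. quasipoint_over M B1 x \<and> quasipoint_over M B2 x \<longrightarrow> f B1 = f B2)}"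

definition character :: "('b \<Rightarrow> complex) set \<Rightarrow> (('b \<Rightarrow> complex) \<Rightarrow> complex) \<Rightarrow> bool" where
  "character A \<phi> \<longleftrightarrow> \<phi> \<in> extensional A \<and>
     (\<forall>f\<in>A. \<forall>g\<in>A. \<phi> (\<lambda>x. f x + g x) = \<phi> f + \<phi> g) \<and>
     (\<forall>f\<in>A. \<forall>c. \<phi> (\<lambda>x. c * f x) = c * \<phi> f) \<and>
     (\<forall>f\<in>A. \<forall>g\<in>A. \<phi> (\<lambda>x. f x * g x) = \<phi> f * \<phi> g) \<and>
     (\<exists>f\<in>A. \<phi> f \<noteq> 0)"

definition gelfand_spectrum :: "('b \<Rightarrow> complex) set \<Rightarrow> (('b \<Rightarrow> complex) \<Rightarrow> complex) topology" where
  "gelfand_spectrum A =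
     subtopology (product_topology (\<lambda>_. euclidean) A) {\<phi>. character A \<phi>}"

definition stone_cech :: "'a topology \<Rightarrow> 'b topology \<Rightarrow> ('a \<Rightarrow> 'b) \<Rightarrow> bool" where
  "stone_cech M Y e \<longleftrightarrow>
     compact_space Y \<and> Hausdorff_space Y \<and> embedding_map M Y e \<and>
     Y closure_of (e ` topspace M) = topspace Y \<and>
     (\<forall>f. continuous_map M euclideanreal f \<and> bounded (f ` topspace M) \<longrightarrow>
        (\<exists>g. continuous_map Y euclideanreal g \<and> (\<forall>x\<in>topspace M. g (e x) = f x)))"

end

(*
  A quasipoint B is a maximal filter of open sets of M. Pushed forward along the
  Stone-Cech embedding e : M -> Y, it has exactly one cluster point limit_point B, by
  compactness and Hausdorffness of Y, and limit_point is a continuous surjection of the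
  compact space Q(T(M)) onto Y that sends quasipoints over x to e x. A function f in C^pt
  is constant on the fibres of pt, so it descends to a bounded continuous function on M;
  its extension g to Y satisfies f = g o limit_point, since both sides are continuous and
  agree on the dense set of quasipoints over points of M. Hence evaluating f at any
  quasipoint over y is well defined and gives a continuous injection of Y into the Gelfand
  spectrum. It is onto because every character of C^pt is a point evaluation: otherwise
  compactness produces an invertible element of its kernel. For discrete M, two distinct
  quasipoints contain disjoint sets U and V, and the extension of the indicator of U
  separates their limit points, so limit_point itself is a homeomorphism.
*)

theory Submission
  imports Defs
begin

lemma continuous_map_mult [continuous_intros]:
  fixes f g :: "'a \<Rightarrow> 'b::real_normed_algebra"
  shows "continuous_map X euclidean f \<Longrightarrow> continuous_map X euclidean g \<Longrightarrow>
    continuous_map X euclidean (\<lambda>x. f x * g x)"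
  by (simp add: continuous_map_atin tendsto_mult)

lemma continuous_map_inverse [continuous_intros]:
  fixes f :: "'a \<Rightarrow> 'b::real_normed_div_algebra"
  shows "continuous_map X euclidean f \<Longrightarrow> (\<And>x. x \<in> topspace X \<Longrightarrow> f x \<noteq> 0) \<Longrightarrow>
    continuous_map X euclidean (\<lambda>x. inverse (f x))"
  by (simp add: continuous_map_atin tendsto_inverse)

lemma continuous_map_cnj [continuous_intros]:
  "continuous_map X euclidean f \<Longrightarrow> continuous_map X euclidean (\<lambda>x. cnj (f x))"
  by (simp add: continuous_map_atin tendsto_cnj)

lemma continuous_map_Re [continuous_intros]:
  "continuous_map X euclidean f \<Longrightarrow> continuous_map X euclideanreal (\<lambda>x. Re (f x))"
  by (simp add: continuous_map_atin tendsto_Re)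

lemma continuous_map_Im [continuous_intros]:
  "continuous_map X euclidean f \<Longrightarrow> continuous_map X euclideanreal (\<lambda>x. Im (f x))"
  by (simp add: continuous_map_atin tendsto_Im)

lemma continuous_map_Complex [continuous_intros]:
  "continuous_map X euclideanreal f \<Longrightarrow> continuous_map X euclideanreal g \<Longrightarrow>
    continuous_map X euclidean (\<lambda>x. Complex (f x) (g x))"
  by (simp add: continuous_map_atin tendsto_Complex)

lemma continuous_map_of_real [continuous_intros]:
  "continuous_map X euclideanreal f \<Longrightarrow> continuous_map X euclidean (\<lambda>x. of_real (f x) :: 'b::real_normed_algebra_1)"
  by (simp add: continuous_map_atin tendsto_of_real)

section \<open>Quasipoints\<close>

lemma quasipoint_dual_ideal: "quasipoint M B \<Longrightarrow> dual_ideal M B"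
  unfolding quasipoint_def by blast

lemma dual_ideal_openin: "dual_ideal M B \<Longrightarrow> U \<in> B \<Longrightarrow> openin M U"
  unfolding dual_ideal_def by blast

lemma dual_ideal_nonempty: "dual_ideal M B \<Longrightarrow> U \<in> B \<Longrightarrow> U \<noteq> {}"
  unfolding dual_ideal_def by blast

lemma dual_ideal_Int: "dual_ideal M B \<Longrightarrow> U \<in> B \<Longrightarrow> V \<in> B \<Longrightarrow> U \<inter> V \<in> B"
  unfolding dual_ideal_def by blast

lemma dual_ideal_mono: "dual_ideal M B \<Longrightarrow> U \<in> B \<Longrightarrow> openin M V \<Longrightarrow> U \<subseteq> V \<Longrightarrow> V \<in> B"
  unfolding dual_ideal_def by blast

lemma dual_ideal_topspace: "dual_ideal M B \<Longrightarrow> topspace M \<in> B"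
  unfolding dual_ideal_def by (metis all_not_in_conv openin_subset openin_topspace)

lemma dual_ideal_Int_Inter:
  assumes B: "dual_ideal M B" and "finite G" "G \<subseteq> B"
  shows "topspace M \<inter> \<Inter>G \<in> B"
  using assms(2,3)
proof (induction G rule: finite_induct)
  case empty
  then show ?case
    using dual_ideal_topspace[OF B] by simp
next
  case (insert U G)
  then have "U \<inter> (topspace M \<inter> \<Inter>G) \<in> B"
    using dual_ideal_Int[OF B] by simp
  moreover have "U \<inter> (topspace M \<inter> \<Inter>G) = topspace M \<inter> \<Inter>(insert U G)"
    by auto
  ultimately show ?case
    by simp
qed

lemma dual_ideal_upward_closure:
  assumes "S \<noteq> {}" "\<forall>W\<in>S. openin M W" "{} \<notin> S" "\<forall>U\<in>S. \<forall>V\<in>S. U \<inter> V \<in> S"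
  shows "dual_ideal M {V. openin M V \<and> (\<exists>W\<in>S. W \<subseteq> V)}" (is "dual_ideal M ?D")
  unfolding dual_ideal_def
proof (intro conjI allI impI ballI)
  show "?D \<noteq> {}"
    using assms(1,2) by blast
  show "{} \<notin> ?D"
    using assms(3) by auto
  fix U V assume "U \<in> ?D \<and> V \<in> ?D"
  then obtain W1 W2 where "W1 \<in> S" "W1 \<subseteq> U" "W2 \<in> S" "W2 \<subseteq> V" "openin M U" "openin M V"
    by blast
  then show "U \<inter> V \<in> ?D"
    using assms(4) by (intro CollectI conjI openin_Int bexI[of _ "W1 \<inter> W2"]) auto
qed auto

lemma dual_ideal_Union_chain:
  assumes "\<C> \<noteq> {}" "subset.chain {D. dual_ideal M D} \<C>"
  shows "dual_ideal M (\<Union>\<C>)"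
proof -
  have ideals: "\<And>D. D \<in> \<C> \<Longrightarrow> dual_ideal M D" and chain: "\<And>D E. D \<in> \<C> \<Longrightarrow> E \<in> \<C> \<Longrightarrow> D \<subseteq> E \<or> E \<subseteq> D"
    using assms(2) unfolding subset.chain_def by auto
  have "U \<inter> V \<in> \<Union>\<C>" if UV: "U \<in> \<Union>\<C>" "V \<in> \<Union>\<C>" for U V
  proof -
    obtain D E where "D \<in> \<C>" "E \<in> \<C>" "U \<in> D" "V \<in> E"
      using UV by blast
    with chain[of D E] show ?thesis
      by (metis UnionI dual_ideal_Int ideals subsetD)
  qed
  moreover have "\<Union>\<C> \<noteq> {}"
  proof -
    obtain D where "D \<in> \<C>"
      using assms(1) by blast
    then have "topspace M \<in> \<Union>\<C>"
      using ideals dual_ideal_topspace by blast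
    then show ?thesis
      by blast
  qed
  moreover have "V \<in> \<Union>\<C>" if "U \<in> \<Union>\<C>" "openin M V" "U \<subseteq> V" for U V
    using that ideals dual_ideal_mono by (metis UnionE UnionI)
  moreover have "\<forall>U\<in>\<Union>\<C>. openin M U" "{} \<notin> \<Union>\<C>"
    using ideals dual_ideal_openin dual_ideal_nonempty by blast+
  ultimately show ?thesis
    unfolding dual_ideal_def by blast
qed

lemma dual_ideal_imp_quasipoint:
  assumes "dual_ideal M D"
  shows "\<exists>B. quasipoint M B \<and> D \<subseteq> B"
proof -
  let ?A = "{C. dual_ideal M C \<and> D \<subseteq> C}"
  have "\<exists>B\<in>?A. \<forall>C\<in>?A. B \<subseteq> C \<longrightarrow> C = B"
  proof (rule subset_Zorn_nonempty)
    show "?A \<noteq> {}"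
      using assms by blast
    fix \<C> assume ne: "\<C> \<noteq> {}" and chain: "subset.chain ?A \<C>"
    then have "subset.chain {C. dual_ideal M C} \<C>"
      unfolding subset.chain_def by blast
    then have "dual_ideal M (\<Union>\<C>)"
      by (rule dual_ideal_Union_chain[OF ne])
    moreover have "D \<subseteq> \<Union>\<C>"
      using ne chain unfolding subset.chain_def by blast
    ultimately show "\<Union>\<C> \<in> ?A"
      by blast
  qed
  then obtain B where "dual_ideal M B" "D \<subseteq> B" "\<forall>C. dual_ideal M C \<and> B \<subseteq> C \<longrightarrow> C = B"
    by (metis (no_types, lifting) dual_order.trans mem_Collect_eq)
  then show ?thesis
    unfolding quasipoint_def by blast
qed

lemma quasipoint_disjoint_member:
  assumes q: "quasipoint M B" and W: "openin M W" "W \<notin> B"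
  shows "\<exists>V\<in>B. V \<inter> W = {}"
proof (rule ccontr)
  assume meets: "\<not> (\<exists>V\<in>B. V \<inter> W = {})"
  have B: "dual_ideal M B"
    using q by (rule quasipoint_dual_ideal)
  let ?S = "{U \<inter> W | U. U \<in> B}"
  let ?D = "{V. openin M V \<and> (\<exists>S\<in>?S. S \<subseteq> V)}"
  have "dual_ideal M ?D"
  proof (rule dual_ideal_upward_closure)
    show "?S \<noteq> {}"
      using dual_ideal_topspace[OF B] by auto
    show "\<forall>S\<in>?S. openin M S"
      using W dual_ideal_openin[OF B] by blast
    show "{} \<notin> ?S"
      using meets by auto
    show "\<forall>S\<in>?S. \<forall>T\<in>?S. S \<inter> T \<in> ?S"
    proof (intro ballI)
      fix S T assume "S \<in> ?S" "T \<in> ?S"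
      then obtain U V where "U \<in> B" "V \<in> B" "S = U \<inter> W" "T = V \<inter> W"
        by blast
      then have "S \<inter> T = (U \<inter> V) \<inter> W" "U \<inter> V \<in> B"
        using dual_ideal_Int[OF B] by auto
      then show "S \<inter> T \<in> ?S"
        by blast
    qed
  qed
  moreover have "B \<subseteq> ?D"
    using B dual_ideal_openin by blast
  ultimately have "?D = B"
    using q unfolding quasipoint_def by blast
  moreover have "W \<in> ?D"
    using W B dual_ideal_topspace by blast
  ultimately show False
    using W by blast
qed

lemma quasipoint_Un:
  assumes q: "quasipoint M B" and "openin M U" "openin M V" "U \<union> V \<in> B"
  shows "U \<in> B \<or> V \<in> B"
proof (rule ccontr)
  assume "\<not> (U \<in> B \<or> V \<in> B)"
  then obtain U' V' where "U' \<in> B" "U' \<inter> U = {}" "V' \<in> B" "V' \<inter> V = {}"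
    using quasipoint_disjoint_member[OF q] assms(2,3) by meson
  moreover note B = quasipoint_dual_ideal[OF q]
  ultimately have "(U \<union> V) \<inter> (U' \<inter> V') \<in> B"
    using assms(4) by (simp add: dual_ideal_Int)
  moreover have "(U \<union> V) \<inter> (U' \<inter> V') = {}"
    using \<open>U' \<inter> U = {}\<close> \<open>V' \<inter> V = {}\<close> by blast
  ultimately show False
    using dual_ideal_nonempty[OF B] by metis
qed

lemma quasipoint_Union:
  assumes q: "quasipoint M B" and "finite F" "\<forall>U\<in>F. openin M U" "\<Union>F \<in> B"
  shows "\<exists>U\<in>F. U \<in> B"
  using assms(2-)
proof (induction F rule: finite_induct)
  case empty
  then show ?case
    using dual_ideal_nonempty[OF quasipoint_dual_ideal[OF q]] by auto
next
  case (insert U F)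
  then show ?case
    using quasipoint_Un[OF q, of U "\<Union>F"] by auto
qed

lemma filter_base_imp_quasipoint:
  assumes "S \<noteq> {}" "\<forall>W\<in>S. openin M W" "{} \<notin> S" "\<forall>U\<in>S. \<forall>V\<in>S. U \<inter> V \<in> S"
  shows "\<exists>B. quasipoint M B \<and> S \<subseteq> B"
proof -
  obtain B where "quasipoint M B" "{V. openin M V \<and> (\<exists>W\<in>S. W \<subseteq> V)} \<subseteq> B"
    using dual_ideal_imp_quasipoint[OF dual_ideal_upward_closure[OF assms]] by blast
  then show ?thesis
    using assms(2) by blast
qed

lemma quasipoint_over_iff:
  "quasipoint_over M B x \<longleftrightarrow>
     quasipoint M B \<and> x \<in> topspace M \<and> (\<forall>T. openin M T \<and> x \<in> T \<longrightarrow> T \<in> B)"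
proof (cases "quasipoint M B \<and> x \<in> topspace M")
  case True
  then have q: "quasipoint M B" and x: "x \<in> topspace M"
    by auto
  note B = quasipoint_dual_ideal[OF q]
  have "(\<forall>U\<in>B. x \<in> M closure_of U) \<longleftrightarrow> (\<forall>T. openin M T \<and> x \<in> T \<longrightarrow> T \<in> B)"
  proof (intro iffI allI impI ballI)
    fix T assume "\<forall>U\<in>B. x \<in> M closure_of U" "openin M T \<and> x \<in> T"
    then show "T \<in> B"
      using quasipoint_disjoint_member[OF q] by (metis disjoint_iff in_closure_of)
  next
    fix U assume nbhds: "\<forall>T. openin M T \<and> x \<in> T \<longrightarrow> T \<in> B" and "U \<in> B"
    have "U \<inter> T \<noteq> {}" if "openin M T" "x \<in> T" for T
      using nbhds that \<open>U \<in> B\<close> dual_ideal_Int[OF B] dual_ideal_nonempty[OF B] by blast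
    then show "x \<in> M closure_of U"
      using x by (auto simp: in_closure_of)
  qed
  then show ?thesis
    unfolding quasipoint_over_def by blast
qed (auto simp: quasipoint_over_def)

lemma quasipoint_over_exists:
  assumes "x \<in> topspace M"
  obtains B where "quasipoint_over M B x"
proof -
  obtain B where "quasipoint M B" "{T. openin M T \<and> x \<in> T} \<subseteq> B"
    using filter_base_imp_quasipoint[of "{T. openin M T \<and> x \<in> T}" M] assms openin_topspace[of M]
    by blast
  then show ?thesis
    using that assms by (auto simp: quasipoint_over_iff)
qed

lemma quasipoint_separation:
  assumes q: "quasipoint M B1" "quasipoint M B2" and "B1 \<noteq> B2"
  obtains U V where "U \<in> B1" "V \<in> B2" "U \<inter> V = {}"
proof -
  have "\<not> B1 \<subseteq> B2"
    using q assms(3) unfolding quasipoint_def by blast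
  then obtain U where U: "U \<in> B1" "U \<notin> B2"
    by blast
  then obtain V where "V \<in> B2" "V \<inter> U = {}"
    using quasipoint_disjoint_member[OF q(2) dual_ideal_openin[OF quasipoint_dual_ideal[OF q(1)] U(1)]]
    by blast
  then show ?thesis
    using that U(1) by blast
qed

section \<open>The space of quasipoints\<close>

definition quasipoints_with :: "'a topology \<Rightarrow> 'a set \<Rightarrow> 'a set set set" where
  "quasipoints_with M U = {B. quasipoint M B \<and> U \<in> B}"

lemma mem_quasipoints_with [simp]: "B \<in> quasipoints_with M U \<longleftrightarrow> quasipoint M B \<and> U \<in> B"
  unfolding quasipoints_with_def by blast

lemma quasipoint_space_eq: "quasipoint_space M = topology_generated_by {quasipoints_with M U | U. openin M U}"
  unfolding quasipoint_space_def quasipoints_with_def ..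

lemma topspace_quasipoint_space: "topspace (quasipoint_space M) = {B. quasipoint M B}"
proof -
  have "quasipoints_with M (topspace M) = {B. quasipoint M B}"
    using quasipoint_dual_ideal dual_ideal_topspace by (auto simp: quasipoints_with_def)
  then have "\<Union>{quasipoints_with M U | U. openin M U} = {B. quasipoint M B}"
    by (auto simp: quasipoints_with_def)
  then show ?thesis
    by (simp add: quasipoint_space_eq)
qed

lemma openin_quasipoints_with: "openin M U \<Longrightarrow> openin (quasipoint_space M) (quasipoints_with M U)"
  unfolding quasipoint_space_eq by (rule topology_generated_by_Basis) blast

lemma quasipoints_with_Int:
  assumes "openin M U" "openin M V"
  shows "quasipoints_with M (U \<inter> V) = quasipoints_with M U \<inter> quasipoints_with M V"
proof -
  have "U \<inter> V \<in> B \<longleftrightarrow> U \<in> B \<and> V \<in> B" if "quasipoint M B" for B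
    using quasipoint_dual_ideal[OF that] assms dual_ideal_Int dual_ideal_mono
    by (metis Int_lower1 Int_lower2)
  then show ?thesis
    by (auto simp: quasipoints_with_def)
qed

lemma openin_quasipoint_space_basic_nbhd:
  assumes "openin (quasipoint_space M) T" "B \<in> T"
  obtains U where "openin M U" "U \<in> B" "quasipoints_with M U \<subseteq> T"
proof -
  have "generate_topology_on {quasipoints_with M U | U. openin M U} T"
    using assms(1) unfolding quasipoint_space_eq by (rule openin_topology_generated_by)
  then have "\<forall>B\<in>T. quasipoint M B \<longrightarrow> (\<exists>U. openin M U \<and> U \<in> B \<and> quasipoints_with M U \<subseteq> T)"
  proof induction
    case (Int S T)
    show ?case
    proof (intro ballI impI)
      fix B assume "B \<in> S \<inter> T" "quasipoint M B"
      then obtain U V where "openin M U" "U \<in> B" "quasipoints_with M U \<subseteq> S"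
        and "openin M V" "V \<in> B" "quasipoints_with M V \<subseteq> T"
        using Int.IH by (meson IntD1 IntD2)
      moreover have "U \<inter> V \<in> B"
        using dual_ideal_Int[OF quasipoint_dual_ideal] \<open>quasipoint M B\<close> \<open>U \<in> B\<close> \<open>V \<in> B\<close> .
      ultimately show "\<exists>W. openin M W \<and> W \<in> B \<and> quasipoints_with M W \<subseteq> S \<inter> T"
        by (intro exI[of _ "U \<inter> V"]) (auto simp: quasipoints_with_Int)
    qed
  next
    case (UN K)
    show ?case
    proof (intro ballI impI)
      fix B assume "B \<in> \<Union>K" "quasipoint M B"
      then obtain S where "S \<in> K" "B \<in> S"
        by blast
      with UN.IH \<open>quasipoint M B\<close> obtain U where "openin M U" "U \<in> B" "quasipoints_with M U \<subseteq> S"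
        by blast
      with \<open>S \<in> K\<close> show "\<exists>U. openin M U \<and> U \<in> B \<and> quasipoints_with M U \<subseteq> \<Union>K"
        by blast
    qed
  qed auto
  moreover have "quasipoint M B"
    using assms openin_subset topspace_quasipoint_space by blast
  ultimately show ?thesis
    using that assms(2) by blast
qed

lemma openin_quasipoint_space_iff:
  "openin (quasipoint_space M) T \<longleftrightarrow>
     (\<forall>B\<in>T. quasipoint M B \<and> (\<exists>U. openin M U \<and> U \<in> B \<and> quasipoints_with M U \<subseteq> T))"
proof
  assume T: "openin (quasipoint_space M) T"
  then have "T \<subseteq> {B. quasipoint M B}"
    using openin_subset topspace_quasipoint_space by metis
  show "\<forall>B\<in>T. quasipoint M B \<and> (\<exists>U. openin M U \<and> U \<in> B \<and> quasipoints_with M U \<subseteq> T)"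
  proof
    fix B assume "B \<in> T"
    then obtain U where "openin M U" "U \<in> B" "quasipoints_with M U \<subseteq> T"
      by (rule openin_quasipoint_space_basic_nbhd[OF T])
    moreover have "quasipoint M B"
      using \<open>B \<in> T\<close> \<open>T \<subseteq> {B. quasipoint M B}\<close> by blast
    ultimately show "quasipoint M B \<and> (\<exists>U. openin M U \<and> U \<in> B \<and> quasipoints_with M U \<subseteq> T)"
      by meson
  qed
next
  assume basic_nbhds: "\<forall>B\<in>T. quasipoint M B \<and> (\<exists>U. openin M U \<and> U \<in> B \<and> quasipoints_with M U \<subseteq> T)"
  show "openin (quasipoint_space M) T"
  proof (subst openin_subopen, intro ballI)
    fix B assume "B \<in> T"
    with basic_nbhds obtain U where "quasipoint M B" "openin M U" "U \<in> B" "quasipoints_with M U \<subseteq> T"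
      by blast
    then show "\<exists>S. openin (quasipoint_space M) S \<and> B \<in> S \<and> S \<subseteq> T"
      using openin_quasipoints_with by (intro exI[of _ "quasipoints_with M U"]) simp
  qed
qed

lemma closedin_quasipoints_with:
  assumes "openin M U"
  shows "closedin (quasipoint_space M) (quasipoints_with M U)"
proof -
  have "openin (quasipoint_space M) {B. quasipoint M B \<and> U \<notin> B}"
    unfolding openin_quasipoint_space_iff
  proof (intro ballI conjI)
    fix B assume B: "B \<in> {B. quasipoint M B \<and> U \<notin> B}"
    then obtain V where "V \<in> B" "V \<inter> U = {}"
      using quasipoint_disjoint_member assms by blast
    moreover have "U \<notin> C" if "quasipoint M C" "V \<in> C" for C
    proof
      assume "U \<in> C"
      then have "V \<inter> U \<in> C"
        using dual_ideal_Int[OF quasipoint_dual_ideal[OF \<open>quasipoint M C\<close>] \<open>V \<in> C\<close>] by blast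
      then show False
        using \<open>V \<inter> U = {}\<close> dual_ideal_nonempty[OF quasipoint_dual_ideal[OF \<open>quasipoint M C\<close>]] by blast
    qed
    ultimately show "\<exists>V. openin M V \<and> V \<in> B \<and> quasipoints_with M V \<subseteq> {B. quasipoint M B \<and> U \<notin> B}"
      using B dual_ideal_openin[OF quasipoint_dual_ideal] by (intro exI[of _ V]) auto
  qed simp
  moreover have "{B. quasipoint M B \<and> U \<notin> B} = topspace (quasipoint_space M) - quasipoints_with M U"
    by (auto simp: topspace_quasipoint_space)
  ultimately show ?thesis
    by (simp add: closedin_def topspace_quasipoint_space subset_eq)
qed

lemma quasipoint_member_outside_closure:
  assumes q: "quasipoint M B" and "finite F" "\<forall>U\<in>F. openin M U" "\<forall>U\<in>F. U \<notin> B"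
  obtains V where "V \<in> B" "V \<subseteq> topspace M - M closure_of (\<Union>F)"
proof -
  have "openin M (\<Union>F)"
    using assms(3) by blast
  moreover have "\<Union>F \<notin> B"
  proof
    assume "\<Union>F \<in> B"
    then obtain U where "U \<in> F" "U \<in> B"
      using quasipoint_Union[OF q assms(2,3)] by blast
    then show False
      using assms(4) by blast
  qed
  ultimately obtain V where "V \<in> B" "V \<inter> \<Union>F = {}"
    using quasipoint_disjoint_member[OF q] by meson
  moreover have "openin M V"
    using dual_ideal_openin[OF quasipoint_dual_ideal[OF q] \<open>V \<in> B\<close>] .
  ultimately have "V \<inter> M closure_of (\<Union>F) = {}" "V \<subseteq> topspace M"
    using openin_Int_closure_of_eq_empty openin_subset[of M V] by blast+
  then show ?thesis
    using that \<open>V \<in> B\<close> by blast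
qed

lemma quasipoint_avoiding_closures:
  assumes opens: "\<forall>U\<in>\<V>. openin M U"
    and no_finite_cover: "\<And>F. finite F \<Longrightarrow> F \<subseteq> \<V> \<Longrightarrow> \<exists>B. quasipoint M B \<and> (\<forall>U\<in>F. U \<notin> B)"
  shows "\<exists>B. quasipoint M B \<and> (\<forall>F. finite F \<and> F \<subseteq> \<V> \<longrightarrow> topspace M - M closure_of (\<Union>F) \<in> B)"
proof -
  define co where "co F = topspace M - M closure_of (\<Union>F)" for F
  let ?S = "co ` {F. finite F \<and> F \<subseteq> \<V>}"
  have "\<exists>B. quasipoint M B \<and> ?S \<subseteq> B"
  proof (rule filter_base_imp_quasipoint)
    show "?S \<noteq> {}" "\<forall>W\<in>?S. openin M W"
      by (auto simp: co_def)
    show "{} \<notin> ?S"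
    proof
      assume "{} \<in> ?S"
      then obtain F where F: "finite F" "F \<subseteq> \<V>" "co F = {}"
        by blast
      then obtain B where B: "quasipoint M B" "\<forall>U\<in>F. U \<notin> B"
        using no_finite_cover by meson
      have "\<forall>U\<in>F. openin M U"
        using F(2) opens by blast
      then obtain V where "V \<in> B" "V \<subseteq> co F"
        unfolding co_def by (rule quasipoint_member_outside_closure[OF B(1) F(1) _ B(2)])
      then show False
        using F(3) dual_ideal_nonempty[OF quasipoint_dual_ideal[OF B(1)]] by blast
    qed
    have co_Un: "co F \<inter> co G = co (F \<union> G)" for F G
      unfolding co_def by (simp add: Union_Un_distrib closure_of_Un Diff_Un)
    show "\<forall>U\<in>?S. \<forall>V\<in>?S. U \<inter> V \<in> ?S"
    proof (intro ballI)
      fix U V assume "U \<in> ?S" "V \<in> ?S"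
      then obtain F G where "finite F" "F \<subseteq> \<V>" "U = co F" "finite G" "G \<subseteq> \<V>" "V = co G"
        by blast
      then show "U \<inter> V \<in> ?S"
        using co_Un by (intro image_eqI[of _ _ "F \<union> G"]) auto
    qed
  qed
  then show ?thesis
    unfolding co_def by blast
qed

lemma quasipoint_finite_cover:
  assumes opens: "\<forall>U\<in>\<V>. openin M U" and cover: "\<forall>B. quasipoint M B \<longrightarrow> (\<exists>U\<in>\<V>. U \<in> B)"
  shows "\<exists>F. finite F \<and> F \<subseteq> \<V> \<and> (\<forall>B. quasipoint M B \<longrightarrow> (\<exists>U\<in>F. U \<in> B))"
proof (rule ccontr)
  assume "\<not> ?thesis"
  then have "\<And>F. finite F \<Longrightarrow> F \<subseteq> \<V> \<Longrightarrow> \<exists>B. quasipoint M B \<and> (\<forall>U\<in>F. U \<notin> B)"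
    by auto
  then obtain B where B: "quasipoint M B"
    and avoids: "\<And>F. finite F \<Longrightarrow> F \<subseteq> \<V> \<Longrightarrow> topspace M - M closure_of (\<Union>F) \<in> B"
    using quasipoint_avoiding_closures[OF opens] by meson
  then obtain U where "U \<in> \<V>" "U \<in> B"
    using cover by blast
  then have "U \<inter> (topspace M - M closure_of U) \<in> B"
    using avoids[of "{U}"] dual_ideal_Int[OF quasipoint_dual_ideal[OF B]] by simp
  moreover have "U \<inter> (topspace M - M closure_of U) = {}"
    using closure_of_subset[OF openin_subset] opens \<open>U \<in> \<V>\<close> by blast
  ultimately show False
    using dual_ideal_nonempty[OF quasipoint_dual_ideal[OF B]] by metis
qed

lemma compact_space_quasipoint_space: "compact_space (quasipoint_space M)"
  unfolding compact_space_def compactin_def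
proof (intro conjI allI impI subset_refl)
  fix \<U> assume \<U>: "(\<forall>T\<in>\<U>. openin (quasipoint_space M) T) \<and> topspace (quasipoint_space M) \<subseteq> \<Union>\<U>"
  define \<V> where "\<V> = {U. openin M U \<and> (\<exists>T\<in>\<U>. quasipoints_with M U \<subseteq> T)}"
  have "\<forall>U\<in>\<V>. openin M U"
    unfolding \<V>_def by blast
  moreover have "\<forall>B. quasipoint M B \<longrightarrow> (\<exists>U\<in>\<V>. U \<in> B)"
  proof (intro allI impI)
    fix B assume "quasipoint M B"
    then obtain T where "T \<in> \<U>" "B \<in> T"
      using \<U> by (auto simp: topspace_quasipoint_space)
    moreover from this obtain U where "openin M U" "U \<in> B" "quasipoints_with M U \<subseteq> T"
      using \<U> unfolding openin_quasipoint_space_iff by meson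
    ultimately show "\<exists>U\<in>\<V>. U \<in> B"
      unfolding \<V>_def by blast
  qed
  ultimately have "\<exists>F. finite F \<and> F \<subseteq> \<V> \<and> (\<forall>B. quasipoint M B \<longrightarrow> (\<exists>U\<in>F. U \<in> B))"
    by (rule quasipoint_finite_cover)
  then obtain F where F: "finite F" "F \<subseteq> \<V>" "\<forall>B. quasipoint M B \<longrightarrow> (\<exists>U\<in>F. U \<in> B)"
    by (elim exE conjE)
  then have "\<forall>U\<in>F. \<exists>T. T \<in> \<U> \<and> quasipoints_with M U \<subseteq> T"
    unfolding \<V>_def by blast
  then obtain t where t: "\<forall>U\<in>F. t U \<in> \<U> \<and> quasipoints_with M U \<subseteq> t U"
    by (rule bchoice[THEN exE])
  show "\<exists>\<F>. finite \<F> \<and> \<F> \<subseteq> \<U> \<and> topspace (quasipoint_space M) \<subseteq> \<Union>\<F>"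
  proof (intro exI conjI)
    show "finite (t ` F)" "t ` F \<subseteq> \<U>"
      using F(1) t by auto
    show "topspace (quasipoint_space M) \<subseteq> \<Union>(t ` F)"
      using F(3) t by (fastforce simp: topspace_quasipoint_space)
  qed
qed

lemma compact_space_Inter_closedin_subset:
  assumes X: "compact_space X" and closed: "\<And>C. C \<in> \<C> \<Longrightarrow> closedin X C"
    and S: "openin X S" and sub: "topspace X \<inter> \<Inter>\<C> \<subseteq> S"
  obtains \<F> where "finite \<F>" "\<F> \<subseteq> \<C>" "topspace X \<inter> \<Inter>\<F> \<subseteq> S"
proof -
  let ?\<D> = "insert (topspace X - S) \<C>"
  have "\<forall>D\<in>?\<D>. closedin X D"
    using S closed by blast
  moreover have "\<Inter>?\<D> = {}"
    using sub by blast
  ultimately obtain \<F>' where \<F>': "finite \<F>'" "\<F>' \<subseteq> ?\<D>" "\<Inter>\<F>' = {}"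
    using X[unfolded compact_space_fip] by meson
  show ?thesis
  proof
    show "finite (\<F>' - {topspace X - S})" "\<F>' - {topspace X - S} \<subseteq> \<C>"
      using \<F>'(1,2) by auto
    have "(topspace X - S) \<inter> \<Inter>(\<F>' - {topspace X - S}) \<subseteq> \<Inter>\<F>'"
      by blast
    then show "topspace X \<inter> \<Inter>(\<F>' - {topspace X - S}) \<subseteq> S"
      using \<F>'(3) by blast
  qed
qed

lemma quasipoint_fibre_nbhd:
  assumes S: "openin (quasipoint_space M) S" and x: "x \<in> topspace M"
    and fibre: "\<And>B. quasipoint_over M B x \<Longrightarrow> B \<in> S"
  obtains W where "openin M W" "x \<in> W" "quasipoints_with M W \<subseteq> S"
proof -
  let ?N = "{T. openin M T \<and> x \<in> T}"
  have closed: "closedin (quasipoint_space M) C" if "C \<in> quasipoints_with M ` ?N" for C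
    using that closedin_quasipoints_with by blast
  have fibre_sub: "topspace (quasipoint_space M) \<inter> \<Inter>(quasipoints_with M ` ?N) \<subseteq> S"
    using fibre x by (auto simp: topspace_quasipoint_space quasipoint_over_iff)
  obtain \<F> where \<F>: "finite \<F>" "\<F> \<subseteq> quasipoints_with M ` ?N"
      "topspace (quasipoint_space M) \<inter> \<Inter>\<F> \<subseteq> S"
    using compact_space_Inter_closedin_subset[OF compact_space_quasipoint_space closed S fibre_sub] .
  obtain G where G: "G \<subseteq> ?N" "finite G" "\<F> = quasipoints_with M ` G"
    using finite_subset_image[OF \<F>(1,2)] by (elim exE conjE)
  show ?thesis
  proof
    show "openin M (topspace M \<inter> \<Inter>G)"
      using G by (intro openin_Int_Inter) auto
    show "x \<in> topspace M \<inter> \<Inter>G"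
      using G x by auto
    have mono: "quasipoints_with M (topspace M \<inter> \<Inter>G) \<subseteq> quasipoints_with M T" if "T \<in> G" for T
    proof -
      have "openin M T" "topspace M \<inter> \<Inter>G \<subseteq> T"
        using G(1) that by auto
      then show ?thesis
        using dual_ideal_mono[OF quasipoint_dual_ideal] by auto
    qed
    show "quasipoints_with M (topspace M \<inter> \<Inter>G) \<subseteq> S"
    proof
      fix B assume B: "B \<in> quasipoints_with M (topspace M \<inter> \<Inter>G)"
      then have "B \<in> quasipoints_with M T" if "T \<in> G" for T
        using mono[OF that] by blast
      then have "B \<in> topspace (quasipoint_space M) \<inter> \<Inter>\<F>"
        using B G(3) by (auto simp: topspace_quasipoint_space)
      then show "B \<in> S"
        using \<F>(3) by blast
    qed
  qed
qed

lemma quasipoint_over_dense: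
  assumes "openin (quasipoint_space M) D" "B \<in> D"
  obtains C x where "quasipoint_over M C x" "C \<in> D"
proof -
  obtain U where U: "openin M U" "U \<in> B" "quasipoints_with M U \<subseteq> D"
    using assms unfolding openin_quasipoint_space_iff by meson
  moreover have "quasipoint M B"
    using assms unfolding openin_quasipoint_space_iff by blast
  ultimately obtain x where "x \<in> U"
    using dual_ideal_nonempty[OF quasipoint_dual_ideal] by blast
  moreover have x: "x \<in> topspace M"
    using U(1) \<open>x \<in> U\<close> openin_subset by blast
  obtain C where C: "quasipoint_over M C x"
    by (rule quasipoint_over_exists[OF x])
  then have "C \<in> quasipoints_with M U"
    using U(1) \<open>x \<in> U\<close> by (simp add: quasipoint_over_iff)
  then show ?thesis
    using that C U(3) by blast
qed

section \<open>Functions constant on the fibres of \<open>pt\<close> and their characters\<close>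

lemma Cpt_iff:
  "f \<in> Cpt M \<longleftrightarrow>
     continuous_map (quasipoint_space M) euclidean f \<and> (\<forall>B. \<not> quasipoint M B \<longrightarrow> f B = 0) \<and>
     (\<forall>x B1 B2. quasipoint_over M B1 x \<and> quasipoint_over M B2 x \<longrightarrow> f B1 = f B2)"
  unfolding Cpt_def topspace_quasipoint_space by blast

lemma CptI:
  assumes "continuous_map (quasipoint_space M) euclidean f" "\<And>B. \<not> quasipoint M B \<Longrightarrow> f B = 0"
    "\<And>x B1 B2. quasipoint_over M B1 x \<Longrightarrow> quasipoint_over M B2 x \<Longrightarrow> f B1 = f B2"
  shows "f \<in> Cpt M"
  using assms unfolding Cpt_iff by blast

lemma
  assumes "f \<in> Cpt M"
  shows Cpt_continuous_map: "continuous_map (quasipoint_space M) euclidean f"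
    and Cpt_outside: "\<not> quasipoint M B \<Longrightarrow> f B = 0"
    and Cpt_fibre_eq: "quasipoint_over M B1 x \<Longrightarrow> quasipoint_over M B2 x \<Longrightarrow> f B1 = f B2"
  using assms unfolding Cpt_iff by blast+

definition Cpt_unit :: "'a topology \<Rightarrow> 'a set set \<Rightarrow> complex" where
  "Cpt_unit M B = (if quasipoint M B then 1 else 0)"

lemma Cpt_unit: "Cpt_unit M \<in> Cpt M"
proof (rule CptI)
  show "continuous_map (quasipoint_space M) euclidean (Cpt_unit M)"
    by (rule continuous_map_eq[of _ _ "\<lambda>x. 1"]) (auto simp: Cpt_unit_def topspace_quasipoint_space)
qed (auto simp: Cpt_unit_def quasipoint_over_def)

lemma Cpt_unop:
  assumes "f \<in> Cpt M" "continuous_map (quasipoint_space M) euclidean (\<lambda>B. h (f B))" "h 0 = 0"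
  shows "(\<lambda>B. h (f B)) \<in> Cpt M"
proof (rule CptI)
  show "\<And>B. \<not> quasipoint M B \<Longrightarrow> h (f B) = 0"
    using assms(1,3) by (simp add: Cpt_outside)
  show "\<And>x B1 B2. quasipoint_over M B1 x \<Longrightarrow> quasipoint_over M B2 x \<Longrightarrow> h (f B1) = h (f B2)"
    using assms(1) by (metis Cpt_fibre_eq)
qed (fact assms(2))

lemma Cpt_binop:
  assumes "f \<in> Cpt M" "g \<in> Cpt M"
    "continuous_map (quasipoint_space M) euclidean (\<lambda>B. h (f B) (g B))" "h 0 0 = 0"
  shows "(\<lambda>B. h (f B) (g B)) \<in> Cpt M"
proof (rule CptI)
  show "\<And>B. \<not> quasipoint M B \<Longrightarrow> h (f B) (g B) = 0"
    using assms(1,2,4) by (simp add: Cpt_outside)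
  show "\<And>x B1 B2. quasipoint_over M B1 x \<Longrightarrow> quasipoint_over M B2 x \<Longrightarrow> h (f B1) (g B1) = h (f B2) (g B2)"
    using assms(1,2) by (metis Cpt_fibre_eq)
qed (fact assms(3))

lemma Cpt_add: "f \<in> Cpt M \<Longrightarrow> g \<in> Cpt M \<Longrightarrow> (\<lambda>B. f B + g B) \<in> Cpt M"
  by (rule Cpt_binop[where h="(+)"]) (auto intro: continuous_map_add Cpt_continuous_map)

lemma Cpt_mult: "f \<in> Cpt M \<Longrightarrow> g \<in> Cpt M \<Longrightarrow> (\<lambda>B. f B * g B) \<in> Cpt M"
  by (rule Cpt_binop[where h="(*)"]) (auto intro: continuous_map_mult Cpt_continuous_map)

lemma Cpt_cmult: "f \<in> Cpt M \<Longrightarrow> (\<lambda>B. c * f B) \<in> Cpt M"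
  by (rule Cpt_unop[where h="(*) c"]) (auto intro: continuous_map_mult Cpt_continuous_map)

lemma Cpt_cnj: "f \<in> Cpt M \<Longrightarrow> (\<lambda>B. cnj (f B)) \<in> Cpt M"
  by (rule Cpt_unop[where h=cnj]) (auto intro: continuous_map_cnj Cpt_continuous_map)

lemma Cpt_inverse:
  assumes "f \<in> Cpt M" "\<And>B. quasipoint M B \<Longrightarrow> f B \<noteq> 0"
  shows "(\<lambda>B. inverse (f B)) \<in> Cpt M"
  using assms
  by (intro Cpt_unop[where h=inverse] continuous_map_inverse Cpt_continuous_map[OF assms(1)])
    (auto simp: topspace_quasipoint_space)

lemma Cpt_zero: "(\<lambda>B. 0) \<in> Cpt M"
  by (rule CptI) auto

lemma Cpt_sum: "finite G \<Longrightarrow> (\<And>b. b \<in> G \<Longrightarrow> p b \<in> Cpt M) \<Longrightarrow> (\<lambda>B. \<Sum>b\<in>G. p b B) \<in> Cpt M"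
  by (induction G rule: finite_induct) (auto intro: Cpt_add Cpt_zero)

lemma
  assumes "character A \<phi>"
  shows character_add: "f \<in> A \<Longrightarrow> g \<in> A \<Longrightarrow> \<phi> (\<lambda>x. f x + g x) = \<phi> f + \<phi> g"
    and character_cmult: "f \<in> A \<Longrightarrow> \<phi> (\<lambda>x. c * f x) = c * \<phi> f"
    and character_mult: "f \<in> A \<Longrightarrow> g \<in> A \<Longrightarrow> \<phi> (\<lambda>x. f x * g x) = \<phi> f * \<phi> g"
  using assms unfolding character_def by blast+

lemma character_Cpt_unit:
  assumes \<phi>: "character (Cpt M) \<phi>"
  shows "\<phi> (Cpt_unit M) = 1"
proof -
  obtain f where f: "f \<in> Cpt M" "\<phi> f \<noteq> 0"
    using \<phi> unfolding character_def by blast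
  have "(\<lambda>B. f B * Cpt_unit M B) = f"
    using f(1) by (auto simp: Cpt_unit_def Cpt_outside)
  then have "\<phi> f = \<phi> f * \<phi> (Cpt_unit M)"
    using character_mult[OF \<phi> f(1) Cpt_unit] by simp
  then show ?thesis
    using f(2) by simp
qed

lemma character_Cpt_zero:
  assumes "character (Cpt M) \<phi>"
  shows "\<phi> (\<lambda>B. 0) = 0"
  using character_cmult[OF assms Cpt_zero, of 0] by simp

lemma character_Cpt_sum:
  assumes \<phi>: "character (Cpt M) \<phi>" and "finite G" "\<And>b. b \<in> G \<Longrightarrow> p b \<in> Cpt M"
  shows "\<phi> (\<lambda>B. \<Sum>b\<in>G. p b B) = (\<Sum>b\<in>G. \<phi> (p b))"
  using assms(2,3)
proof (induction G rule: finite_induct)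
  case empty
  then show ?case
    using character_Cpt_zero[OF \<phi>] by simp
next
  case (insert a G)
  then show ?case
    using character_add[OF \<phi> _ Cpt_sum[OF insert.hyps(1)], of "p a" p] by simp
qed

lemma character_Cpt_nonvanishing:
  assumes \<phi>: "character (Cpt M) \<phi>" and s: "s \<in> Cpt M" "\<And>B. quasipoint M B \<Longrightarrow> s B \<noteq> 0"
  shows "\<phi> s \<noteq> 0"
proof -
  have "(\<lambda>B. s B * inverse (s B)) = Cpt_unit M"
    using s by (auto simp: Cpt_unit_def Cpt_outside)
  then have "\<phi> s * \<phi> (\<lambda>B. inverse (s B)) = 1"
    using character_mult[OF \<phi> s(1) Cpt_inverse[OF s]] character_Cpt_unit[OF \<phi>] by simp
  then show ?thesis
    by auto
qed

lemma character_Cpt_kernel_nonzero_at: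
  assumes \<phi>: "character (Cpt M) \<phi>" and f: "f \<in> Cpt M" "\<phi> f \<noteq> f B" and B: "quasipoint M B"
  obtains g where "g \<in> Cpt M" "\<phi> g = 0" "g B \<noteq> 0"
proof
  let ?g = "\<lambda>C. f C + (- \<phi> f) * Cpt_unit M C"
  show "?g \<in> Cpt M"
    by (intro Cpt_add Cpt_cmult f Cpt_unit)
  show "\<phi> ?g = 0"
    unfolding character_add[OF \<phi> f(1) Cpt_cmult[OF Cpt_unit]] character_cmult[OF \<phi> Cpt_unit]
      character_Cpt_unit[OF \<phi>]
    by simp
  show "?g B \<noteq> 0"
    using f(2) B by (simp add: Cpt_unit_def)
qed

text \<open>The function \<open>\<Sum>b. g\<^sub>b * cnj g\<^sub>b\<close> lies in the kernel and vanishes exactly at the common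
  zeros of the \<open>g\<^sub>b\<close>; without one it would be invertible.\<close>

lemma character_Cpt_common_zero:
  assumes \<phi>: "character (Cpt M) \<phi>" and G: "finite G"
    and g: "\<And>b. b \<in> G \<Longrightarrow> g b \<in> Cpt M" "\<And>b. b \<in> G \<Longrightarrow> \<phi> (g b) = 0"
  obtains B where "quasipoint M B" "\<And>b. b \<in> G \<Longrightarrow> g b B = 0"
proof (rule ccontr)
  assume "\<not> thesis"
  with that have no_common_zero: "\<exists>b\<in>G. g b B \<noteq> 0" if "quasipoint M B" for B
    using \<open>quasipoint M B\<close> by blast
  define s where "s B = (\<Sum>b\<in>G. g b B * cnj (g b B))" for B
  have "s \<in> Cpt M"
    unfolding s_def using g by (intro Cpt_sum Cpt_mult Cpt_cnj G)
  moreover have "\<phi> s = 0"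
    unfolding s_def using g
    by (simp add: character_Cpt_sum[OF \<phi> G] character_mult[OF \<phi>] Cpt_mult Cpt_cnj)
  moreover have "s B \<noteq> 0" if B: "quasipoint M B" for B
  proof -
    obtain b where "b \<in> G" "g b B \<noteq> 0"
      using no_common_zero[OF B] by blast
    then have "(\<Sum>b\<in>G. (cmod (g b B))\<^sup>2) > 0"
      by (intro sum_pos2[OF G \<open>b \<in> G\<close>]) auto
    moreover have "s B = of_real (\<Sum>b\<in>G. (cmod (g b B))\<^sup>2)"
      unfolding s_def of_real_sum complex_norm_square ..
    ultimately show ?thesis
      by (metis of_real_eq_0_iff order_less_irrefl)
  qed
  ultimately show False
    using character_Cpt_nonvanishing[OF \<phi>] by blast
qed

lemma character_Cpt_evaluation:
  assumes \<phi>: "character (Cpt M) \<phi>"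
  obtains B where "quasipoint M B" "\<And>f. f \<in> Cpt M \<Longrightarrow> \<phi> f = f B"
proof (rule ccontr)
  assume "\<not> thesis"
  then have "\<forall>B. \<exists>g. quasipoint M B \<longrightarrow> g \<in> Cpt M \<and> \<phi> g = 0 \<and> g B \<noteq> 0"
    using that character_Cpt_kernel_nonzero_at[OF \<phi>] by metis
  then obtain g where g: "\<And>B. quasipoint M B \<Longrightarrow> g B \<in> Cpt M \<and> \<phi> (g B) = 0 \<and> g B B \<noteq> 0"
    by metis
  let ?Q = "topspace (quasipoint_space M)"
  let ?N = "\<lambda>B. {C \<in> ?Q. g B C \<in> - {0}}"
  have "openin (quasipoint_space M) (?N B)" if "B \<in> ?Q" for B
    using that g by (intro openin_continuous_map_preimage[OF Cpt_continuous_map])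
      (auto simp: topspace_quasipoint_space)
  then have "openin (quasipoint_space M) T" if "T \<in> ?N ` ?Q" for T
    using that by blast
  moreover have "?Q \<subseteq> \<Union>(?N ` ?Q)"
    using g by (auto simp: topspace_quasipoint_space)
  ultimately have "\<exists>\<F>. finite \<F> \<and> \<F> \<subseteq> ?N ` ?Q \<and> ?Q \<subseteq> \<Union>\<F>"
    by (rule compactinD[OF compact_space_quasipoint_space[unfolded compact_space_def]])
  then obtain \<F> where \<F>: "finite \<F>" "\<F> \<subseteq> ?N ` ?Q" "?Q \<subseteq> \<Union>\<F>"
    by (elim exE conjE)
  obtain G where G: "G \<subseteq> ?Q" "finite G" "\<F> = ?N ` G"
    using finite_subset_image[OF \<F>(1,2)] by (elim exE conjE)
  have "g b \<in> Cpt M" "\<phi> (g b) = 0" if "b \<in> G" for b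
    using g G(1) that by (auto simp: topspace_quasipoint_space)
  then obtain B where "quasipoint M B" "\<And>b. b \<in> G \<Longrightarrow> g b B = 0"
    using character_Cpt_common_zero[OF \<phi> G(2)] by metis
  then show False
    using \<F>(3) G(3) by (auto simp: topspace_quasipoint_space)
qed

definition fibre_value :: "'a topology \<Rightarrow> ('a set set \<Rightarrow> complex) \<Rightarrow> 'a \<Rightarrow> complex" where
  "fibre_value M f x = f (SOME B. quasipoint_over M B x)"

lemma fibre_value_eq:
  assumes "f \<in> Cpt M" "quasipoint_over M B x"
  shows "fibre_value M f x = f B"
proof -
  have "quasipoint_over M (SOME B. quasipoint_over M B x) x"
    using assms(2) by (rule someI)
  then show ?thesis
    unfolding fibre_value_def by (rule Cpt_fibre_eq[OF assms(1) _ assms(2)])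
qed

lemma continuous_map_fibre_value:
  assumes f: "f \<in> Cpt M"
  shows "continuous_map M euclidean (fibre_value M f)"
  unfolding continuous_map
proof (intro conjI allI impI)
  fix T :: "complex set" assume "openin euclidean T"
  then have S: "openin (quasipoint_space M) {B \<in> topspace (quasipoint_space M). f B \<in> T}"
    by (rule openin_continuous_map_preimage[OF Cpt_continuous_map[OF f]])
  show "openin M {x \<in> topspace M. fibre_value M f x \<in> T}"
  proof (subst openin_subopen, intro ballI)
    fix x assume x: "x \<in> {x \<in> topspace M. fibre_value M f x \<in> T}"
    have "B \<in> {B \<in> topspace (quasipoint_space M). f B \<in> T}" if "quasipoint_over M B x" for B
      using that x fibre_value_eq[OF f that]
      by (simp add: topspace_quasipoint_space quasipoint_over_def)
    then obtain W where W: "openin M W" "x \<in> W"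
      and "quasipoints_with M W \<subseteq> {B \<in> topspace (quasipoint_space M). f B \<in> T}"
      using quasipoint_fibre_nbhd[OF S] x by blast
    moreover have "fibre_value M f x' \<in> T" if "x' \<in> W" for x'
    proof -
      have x': "x' \<in> topspace M"
        using W(1) that openin_subset by blast
      then obtain B where B: "quasipoint_over M B x'"
        by (rule quasipoint_over_exists)
      then have "B \<in> quasipoints_with M W"
        using W that by (simp add: quasipoint_over_iff)
      then show ?thesis
        using fibre_value_eq[OF f B] \<open>quasipoints_with M W \<subseteq> _\<close> by auto
    qed
    moreover have "W \<subseteq> topspace M"
      using W(1) by (rule openin_subset)
    ultimately show "\<exists>W. openin M W \<and> x \<in> W \<and> W \<subseteq> {x \<in> topspace M. fibre_value M f x \<in> T}"
      by (intro exI[of _ W]) auto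
  qed
qed auto

lemma bounded_fibre_value:
  assumes f: "f \<in> Cpt M"
  shows "bounded (fibre_value M f ` topspace M)"
proof (rule bounded_subset)
  show "bounded (f ` topspace (quasipoint_space M))"
    using image_compactin[OF compact_space_quasipoint_space[unfolded compact_space_def] Cpt_continuous_map[OF f]]
    by (simp add: compact_imp_bounded)
  show "fibre_value M f ` topspace M \<subseteq> f ` topspace (quasipoint_space M)"
  proof
    fix z assume "z \<in> fibre_value M f ` topspace M"
    then obtain x where x: "x \<in> topspace M" "z = fibre_value M f x"
      by blast
    moreover obtain B where "quasipoint_over M B x"
      by (rule quasipoint_over_exists[OF x(1)])
    ultimately show "z \<in> f ` topspace (quasipoint_space M)"
      using fibre_value_eq[OF f] by (auto simp: topspace_quasipoint_space quasipoint_over_def)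
  qed
qed

lemma Hausdorff_space_gelfand_spectrum: "Hausdorff_space (gelfand_spectrum A)"
  unfolding gelfand_spectrum_def
  by (intro Hausdorff_space_subtopology) (simp add: Hausdorff_space_product_topology)

lemma topspace_gelfand_spectrum:
  "topspace (gelfand_spectrum A) = {\<phi>. character A \<phi>}"
  unfolding gelfand_spectrum_def by (auto simp: topspace_product_topology PiE_def character_def)

section \<open>Quasipoints and the Stone-Cech compactification\<close>

locale stone_cech_compactification =
  fixes M :: "'a topology" and Y :: "'b topology" and e :: "'a \<Rightarrow> 'b"
  assumes stone_cech: "stone_cech M Y e"
begin

lemma compact_space_Y: "compact_space Y"
  and Hausdorff_space_Y: "Hausdorff_space Y"
  and embedding_map_e: "embedding_map M Y e"
  and closure_of_image_e: "Y closure_of (e ` topspace M) = topspace Y"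
  using stone_cech unfolding stone_cech_def by blast+

lemma continuous_map_e: "continuous_map M Y e"
  using embedding_map_e embedding_map_def homeomorphic_imp_continuous_map continuous_map_in_subtopology
  by metis

lemma bounded_real_extension:
  assumes "continuous_map M euclideanreal f" "bounded (f ` topspace M)"
  obtains g where "continuous_map Y euclideanreal g" "\<And>x. x \<in> topspace M \<Longrightarrow> g (e x) = f x"
  using stone_cech assms unfolding stone_cech_def by metis

lemma bounded_complex_extension:
  fixes f :: "'a \<Rightarrow> complex"
  assumes f: "continuous_map M euclidean f" "bounded (f ` topspace M)"
  obtains g where "continuous_map Y euclidean g" "\<And>x. x \<in> topspace M \<Longrightarrow> g (e x) = f x"
proof -
  have "bounded ((\<lambda>x. Re (f x)) ` topspace M)" "bounded ((\<lambda>x. Im (f x)) ` topspace M)"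
    using bounded_linear_image[OF f(2) bounded_linear_Re] bounded_linear_image[OF f(2) bounded_linear_Im]
    by (simp_all add: image_image)
  then obtain gr gi where
    gr: "continuous_map Y euclideanreal gr" "\<And>x. x \<in> topspace M \<Longrightarrow> gr (e x) = Re (f x)" and
    gi: "continuous_map Y euclideanreal gi" "\<And>x. x \<in> topspace M \<Longrightarrow> gi (e x) = Im (f x)"
    using bounded_real_extension continuous_map_Re continuous_map_Im f(1) by metis
  show ?thesis
  proof
    show "continuous_map Y euclidean (\<lambda>y. Complex (gr y) (gi y))"
      using gr(1) gi(1) by (rule continuous_map_Complex)
    show "Complex (gr (e x)) (gi (e x)) = f x" if "x \<in> topspace M" for x
      using gr(2) gi(2) that by (simp add: complex_eq_iff)
  qed
qed

lemma image_e_subset: "U \<subseteq> topspace M \<Longrightarrow> e ` U \<subseteq> topspace Y"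
  using continuous_map_image_subset_topspace[OF continuous_map_e] by blast

definition cluster_point :: "'a set set \<Rightarrow> 'b \<Rightarrow> bool" where
  "cluster_point B y \<longleftrightarrow> y \<in> topspace Y \<and> (\<forall>U\<in>B. y \<in> Y closure_of (e ` U))"

lemma preimage_nbhd_mem_quasipoint:
  assumes q: "quasipoint M B" and y: "cluster_point B y"
    and V: "openin Y V" "y \<in> V"
  shows "{x \<in> topspace M. e x \<in> V} \<in> B"
proof (rule ccontr)
  assume "{x \<in> topspace M. e x \<in> V} \<notin> B"
  moreover have "openin M {x \<in> topspace M. e x \<in> V}"
    using continuous_map_e V(1) by (rule openin_continuous_map_preimage)
  ultimately obtain U where U: "U \<in> B" "U \<inter> {x \<in> topspace M. e x \<in> V} = {}"
    using quasipoint_disjoint_member[OF q] by meson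
  have "U \<subseteq> topspace M"
    using dual_ideal_openin[OF quasipoint_dual_ideal[OF q] U(1)] by (rule openin_subset)
  then have "V \<inter> e ` U = {}"
    using U(2) by blast
  then have "V \<inter> Y closure_of (e ` U) = {}"
    using openin_Int_closure_of_eq_empty[OF V(1)] by blast
  then show False
    using y U(1) V(2) unfolding cluster_point_def by blast
qed

lemma cluster_point_exists:
  assumes q: "quasipoint M B"
  obtains y where "cluster_point B y"
proof -
  note B = quasipoint_dual_ideal[OF q]
  let ?\<C> = "(\<lambda>U. Y closure_of (e ` U)) ` B"
  have "\<Inter>\<F> \<noteq> {}" if \<F>: "finite \<F>" "\<F> \<subseteq> ?\<C>" for \<F>
  proof -
    obtain G where G: "G \<subseteq> B" "finite G" "\<F> = (\<lambda>U. Y closure_of (e ` U)) ` G"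
      using finite_subset_image[OF \<F>] by (elim exE conjE)
    obtain x where x: "x \<in> topspace M \<inter> \<Inter>G"
      using dual_ideal_nonempty[OF B dual_ideal_Int_Inter[OF B G(2,1)]] by blast
    have "e x \<in> Y closure_of (e ` U)" if "U \<in> G" for U
    proof (rule closure_of_subset[OF image_e_subset, THEN subsetD])
      show "U \<subseteq> topspace M"
        using that G(1) dual_ideal_openin[OF B] openin_subset by blast
      show "e x \<in> e ` U"
        using x that by blast
    qed
    then show ?thesis
      using G(3) by blast
  qed
  then have "\<Inter>?\<C> \<noteq> {}"
    using compact_space_Y[unfolded compact_space_fip] by (auto intro: closedin_closure_of)
  then obtain y where y: "\<forall>U\<in>B. y \<in> Y closure_of (e ` U)"
    by blast
  moreover have "y \<in> topspace Y"
    using y dual_ideal_topspace[OF B] closure_of_subset_topspace[of Y] by (meson subsetD)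
  ultimately show ?thesis
    using that unfolding cluster_point_def by blast
qed

lemma cluster_point_unique:
  assumes q: "quasipoint M B" and "cluster_point B y1" "cluster_point B y2"
  shows "y1 = y2"
proof (rule ccontr)
  assume "y1 \<noteq> y2"
  then obtain V1 V2 where V: "openin Y V1" "openin Y V2" "y1 \<in> V1" "y2 \<in> V2" "disjnt V1 V2"
    using Hausdorff_space_Y assms(2,3) unfolding Hausdorff_space_def cluster_point_def by metis
  have "{x \<in> topspace M. e x \<in> V1} \<inter> {x \<in> topspace M. e x \<in> V2} \<in> B"
    using preimage_nbhd_mem_quasipoint[OF q] assms(2,3) V(1-4)
      dual_ideal_Int[OF quasipoint_dual_ideal[OF q]] by blast
  moreover have "{x \<in> topspace M. e x \<in> V1} \<inter> {x \<in> topspace M. e x \<in> V2} = {}"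
    using V(5) unfolding disjnt_def by blast
  ultimately show False
    using dual_ideal_nonempty[OF quasipoint_dual_ideal[OF q]] by metis
qed

definition limit_point :: "'a set set \<Rightarrow> 'b" where
  "limit_point B = (THE y. cluster_point B y)"

lemma cluster_point_limit_point:
  assumes "quasipoint M B"
  shows "cluster_point B (limit_point B)"
proof -
  obtain y where "cluster_point B y"
    using cluster_point_exists[OF assms] .
  then have "\<exists>!y. cluster_point B y"
    using cluster_point_unique[OF assms] by blast
  then show ?thesis
    unfolding limit_point_def by (rule theI')
qed

lemma limit_point_eqI: "quasipoint M B \<Longrightarrow> cluster_point B y \<Longrightarrow> limit_point B = y"
  using cluster_point_unique cluster_point_limit_point by blast

lemma limit_point_in_topspace: "quasipoint M B \<Longrightarrow> limit_point B \<in> topspace Y"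
  using cluster_point_limit_point unfolding cluster_point_def by blast

lemma limit_point_in_closure: "quasipoint M B \<Longrightarrow> U \<in> B \<Longrightarrow> limit_point B \<in> Y closure_of (e ` U)"
  using cluster_point_limit_point unfolding cluster_point_def by blast

lemma limit_point_over:
  assumes "quasipoint_over M B x"
  shows "limit_point B = e x"
proof (rule limit_point_eqI)
  have q: "quasipoint M B" and x: "x \<in> topspace M" and cl: "\<forall>U\<in>B. x \<in> M closure_of U"
    using assms unfolding quasipoint_over_def by auto
  then show "quasipoint M B"
    by blast
  have "e x \<in> Y closure_of (e ` U)" if "U \<in> B" for U
    using continuous_map_image_closure_subset[OF continuous_map_e] cl that by blast
  then show "cluster_point B (e x)"
    using continuous_map_e x unfolding cluster_point_def continuous_map_def by blast
qed

lemma continuous_map_limit_point: "continuous_map (quasipoint_space M) Y limit_point"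
  unfolding continuous_map
proof (intro conjI allI impI)
  show "limit_point ` topspace (quasipoint_space M) \<subseteq> topspace Y"
    using limit_point_in_topspace by (auto simp: topspace_quasipoint_space)
  fix V assume V: "openin Y V"
  show "openin (quasipoint_space M) {B \<in> topspace (quasipoint_space M). limit_point B \<in> V}"
    unfolding openin_quasipoint_space_iff
  proof (intro ballI conjI)
    fix B assume "B \<in> {B \<in> topspace (quasipoint_space M). limit_point B \<in> V}"
    then have q: "quasipoint M B" and "limit_point B \<in> V"
      by (auto simp: topspace_quasipoint_space)
    then show "quasipoint M B"
      by blast
    have "regular_space Y"
      using compact_space_Y Hausdorff_space_Y by (rule compact_Hausdorff_imp_regular_space)
    moreover have "closedin Y (topspace Y - V)" "limit_point B \<in> topspace Y - (topspace Y - V)"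
      using V \<open>limit_point B \<in> V\<close> limit_point_in_topspace[OF q] by auto
    ultimately obtain W where W: "openin Y W" "limit_point B \<in> W"
      and "disjnt (topspace Y - V) (Y closure_of W)"
      unfolding regular_space by meson
    then have clW: "Y closure_of W \<subseteq> V"
      using closure_of_subset_topspace[of Y W] unfolding disjnt_def by blast
    define U where "U = {x \<in> topspace M. e x \<in> W}"
    have U: "U \<in> B"
      unfolding U_def using preimage_nbhd_mem_quasipoint[OF q cluster_point_limit_point[OF q] W(1,2)] .
    have "limit_point C \<in> V" if "C \<in> quasipoints_with M U" for C
    proof -
      have "limit_point C \<in> Y closure_of (e ` U)"
        using that limit_point_in_closure by simp
      also have "\<dots> \<subseteq> Y closure_of W"
        unfolding U_def by (rule closure_of_mono) blast
      finally show ?thesis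
        using clW by blast
    qed
    then show "\<exists>U. openin M U \<and> U \<in> B \<and>
        quasipoints_with M U \<subseteq> {B \<in> topspace (quasipoint_space M). limit_point B \<in> V}"
      using U dual_ideal_openin[OF quasipoint_dual_ideal[OF q] U]
      by (intro exI[of _ U]) (auto simp: topspace_quasipoint_space)
  qed
qed

lemma limit_point_image: "limit_point ` topspace (quasipoint_space M) = topspace Y"
proof
  show "limit_point ` topspace (quasipoint_space M) \<subseteq> topspace Y"
    using continuous_map_limit_point continuous_map_image_subset_topspace by blast
  have "closedin Y (limit_point ` topspace (quasipoint_space M))"
    using image_compactin[OF compact_space_quasipoint_space[unfolded compact_space_def]
        continuous_map_limit_point]
    by (rule compactin_imp_closedin[OF Hausdorff_space_Y])
  moreover have "e ` topspace M \<subseteq> limit_point ` topspace (quasipoint_space M)"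
  proof
    fix y assume "y \<in> e ` topspace M"
    then obtain x where x: "x \<in> topspace M" "y = e x"
      by blast
    obtain B where "quasipoint_over M B x"
      by (rule quasipoint_over_exists[OF x(1)])
    then have "B \<in> topspace (quasipoint_space M)" "limit_point B = y"
      using limit_point_over x(2) by (auto simp: topspace_quasipoint_space quasipoint_over_def)
    then show "y \<in> limit_point ` topspace (quasipoint_space M)"
      by blast
  qed
  ultimately show "topspace Y \<subseteq> limit_point ` topspace (quasipoint_space M)"
    using closure_of_minimal closure_of_image_e by metis
qed

lemma Cpt_factors_through_limit_point:
  assumes f: "f \<in> Cpt M"
  obtains g where "continuous_map Y euclidean g" "\<And>B. quasipoint M B \<Longrightarrow> f B = g (limit_point B)"
proof -
  obtain g where g: "continuous_map Y euclidean g" "\<And>x. x \<in> topspace M \<Longrightarrow> g (e x) = fibre_value M f x"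
    using bounded_complex_extension[OF continuous_map_fibre_value[OF f] bounded_fibre_value[OF f]]
    by metis
  let ?D = "{B \<in> topspace (quasipoint_space M). f B - g (limit_point B) \<in> - {0}}"
  have "continuous_map (quasipoint_space M) euclidean (\<lambda>B. f B - g (limit_point B))"
    using continuous_map_compose[OF continuous_map_limit_point g(1)] Cpt_continuous_map[OF f]
    by (intro continuous_map_diff) (auto simp: o_def)
  then have "openin (quasipoint_space M) ?D"
    by (rule openin_continuous_map_preimage) (simp add: open_Compl)
  moreover have "B \<notin> ?D" if B: "quasipoint_over M B x" for B x
  proof -
    have "x \<in> topspace M"
      using B unfolding quasipoint_over_def by blast
    then have "f B = g (limit_point B)"
      using g(2) fibre_value_eq[OF f B] limit_point_over[OF B] by simp
    then show ?thesis
      by simp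
  qed
  ultimately have "?D = {}"
    using quasipoint_over_dense[of M ?D] by blast
  then show ?thesis
    using that g(1) by (auto simp: topspace_quasipoint_space)
qed

lemma Cpt_eq_if_limit_point_eq:
  assumes "f \<in> Cpt M" "quasipoint M B1" "quasipoint M B2" "limit_point B1 = limit_point B2"
  shows "f B1 = f B2"
  using Cpt_factors_through_limit_point[OF assms(1)] assms(2-4) by metis

lemma Cpt_limit_point_comp:
  assumes g: "continuous_map Y euclidean g"
  shows "(\<lambda>B. if quasipoint M B then g (limit_point B) else 0) \<in> Cpt M"
proof (rule CptI)
  show "continuous_map (quasipoint_space M) euclidean (\<lambda>B. if quasipoint M B then g (limit_point B) else 0)"
    using continuous_map_compose[OF continuous_map_limit_point g]
    by (rule continuous_map_eq) (simp add: topspace_quasipoint_space)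
qed (auto simp: quasipoint_over_def limit_point_over)

definition fibre_point :: "'b \<Rightarrow> 'a set set" where
  "fibre_point y = (SOME B. quasipoint M B \<and> limit_point B = y)"

lemma fibre_point:
  assumes "y \<in> topspace Y"
  shows "quasipoint M (fibre_point y)" "limit_point (fibre_point y) = y"
proof -
  have "y \<in> limit_point ` topspace (quasipoint_space M)"
    using assms limit_point_image by simp
  then have "\<exists>B. quasipoint M B \<and> limit_point B = y"
    by (auto simp: topspace_quasipoint_space)
  then have "quasipoint M (fibre_point y) \<and> limit_point (fibre_point y) = y"
    unfolding fibre_point_def by (rule someI_ex)
  then show "quasipoint M (fibre_point y)" "limit_point (fibre_point y) = y"
    by auto
qed

definition gelfand_map :: "'b \<Rightarrow> ('a set set \<Rightarrow> complex) \<Rightarrow> complex" where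
  "gelfand_map y = restrict (\<lambda>f. f (fibre_point y)) (Cpt M)"

lemma gelfand_map_eq:
  assumes "f \<in> Cpt M" "quasipoint M B" "limit_point B = y"
  shows "gelfand_map y f = f B"
proof -
  have y: "y \<in> topspace Y"
    using assms(2,3) limit_point_in_topspace by blast
  have "f (fibre_point y) = f B"
    using Cpt_eq_if_limit_point_eq[OF assms(1) fibre_point(1)[OF y] assms(2)] fibre_point(2)[OF y] assms(3)
    by simp
  then show ?thesis
    using assms(1) by (simp add: gelfand_map_def)
qed

lemma character_gelfand_map:
  assumes y: "y \<in> topspace Y"
  shows "character (Cpt M) (gelfand_map y)"
  unfolding character_def
proof (intro conjI ballI allI)
  show "gelfand_map y \<in> extensional (Cpt M)"
    unfolding gelfand_map_def by (rule restrict_extensional)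
  show "\<exists>f\<in>Cpt M. gelfand_map y f \<noteq> 0"
    using Cpt_unit fibre_point(1)[OF y]
    by (intro bexI[of _ "Cpt_unit M"]) (simp_all add: gelfand_map_def Cpt_unit_def Cpt_unit)
qed (simp_all add: gelfand_map_def Cpt_add Cpt_cmult Cpt_mult)

lemma continuous_map_gelfand_map: "continuous_map Y (gelfand_spectrum (Cpt M)) gelfand_map"
  unfolding gelfand_spectrum_def continuous_map_in_subtopology
proof
  show "continuous_map Y (product_topology (\<lambda>_. euclidean) (Cpt M)) gelfand_map"
    unfolding continuous_map_componentwise
  proof (intro conjI ballI)
    show "gelfand_map ` topspace Y \<subseteq> extensional (Cpt M)"
      by (auto simp: gelfand_map_def)
    fix f assume f: "f \<in> Cpt M"
    then obtain g where g: "continuous_map Y euclidean g" "\<And>B. quasipoint M B \<Longrightarrow> f B = g (limit_point B)"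
      using Cpt_factors_through_limit_point by metis
    show "continuous_map Y euclidean (\<lambda>y. gelfand_map y f)"
      using g(1) by (rule continuous_map_eq) (simp add: gelfand_map_def f g(2) fibre_point)
  qed
  show "gelfand_map \<in> topspace Y \<rightarrow> {\<phi>. character (Cpt M) \<phi>}"
    using character_gelfand_map by blast
qed

lemma inj_on_gelfand_map: "inj_on gelfand_map (topspace Y)"
proof (rule inj_onI, rule ccontr)
  fix y1 y2 assume y: "y1 \<in> topspace Y" "y2 \<in> topspace Y" "gelfand_map y1 = gelfand_map y2" "y1 \<noteq> y2"
  have "normal_space Y"
    using compact_space_Y Hausdorff_space_Y by (simp add: compact_Hausdorff_or_regular_imp_normal_space)
  then obtain g where g: "continuous_map Y euclideanreal g" "g y1 = 0" "g y2 = 1"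
    using Urysohn_lemma_alt[of Y "{y1}" "{y2}" 0 1] y closedin_Hausdorff_singleton[OF Hausdorff_space_Y]
    by auto
  let ?f = "\<lambda>B. if quasipoint M B then complex_of_real (g (limit_point B)) else 0"
  have f: "?f \<in> Cpt M"
    using g(1) by (intro Cpt_limit_point_comp continuous_map_of_real)
  have "gelfand_map y1 ?f = g y1" "gelfand_map y2 ?f = g y2"
    using gelfand_map_eq[OF f fibre_point] y(1,2) fibre_point by simp_all
  then show False
    using y(3) g(2,3) by simp
qed

lemma gelfand_map_image: "gelfand_map ` topspace Y = topspace (gelfand_spectrum (Cpt M))"
proof
  show "gelfand_map ` topspace Y \<subseteq> topspace (gelfand_spectrum (Cpt M))"
    using continuous_map_gelfand_map continuous_map_image_subset_topspace by blast
  show "topspace (gelfand_spectrum (Cpt M)) \<subseteq> gelfand_map ` topspace Y"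
  proof
    fix \<phi> assume "\<phi> \<in> topspace (gelfand_spectrum (Cpt M))"
    then have \<phi>: "character (Cpt M) \<phi>"
      by (simp add: topspace_gelfand_spectrum)
    then obtain B where B: "quasipoint M B" "\<And>f. f \<in> Cpt M \<Longrightarrow> \<phi> f = f B"
      using character_Cpt_evaluation by metis
    have "gelfand_map (limit_point B) = \<phi>"
    proof
      fix f show "gelfand_map (limit_point B) f = \<phi> f"
      proof (cases "f \<in> Cpt M")
        case True
        then show ?thesis
          using B(2) gelfand_map_eq[OF True B(1) refl] by simp
      next
        case False
        have "\<phi> \<in> extensional (Cpt M)"
          using \<phi> unfolding character_def by blast
        then have "\<phi> f = undefined"
          using False by (rule extensional_arb)
        then show ?thesis
          using False by (simp add: gelfand_map_def)
      qed
    qed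
    then show "\<phi> \<in> gelfand_map ` topspace Y"
      using limit_point_in_topspace[OF B(1)] by blast
  qed
qed

theorem homeomorphic_gelfand_spectrum: "Y homeomorphic_space gelfand_spectrum (Cpt M)"
  using continuous_imp_homeomorphic_map[OF continuous_map_gelfand_map compact_space_Y
      Hausdorff_space_gelfand_spectrum gelfand_map_image inj_on_gelfand_map]
  by (rule homeomorphic_map_imp_homeomorphic_space)

lemma limit_point_eq_const:
  assumes q: "quasipoint M B" "U \<in> B" and g: "continuous_map Y euclideanreal g"
    and const: "\<And>x. x \<in> U \<Longrightarrow> g (e x) = c"
  shows "g (limit_point B) = c"
proof -
  have "U \<subseteq> topspace M"
    using dual_ideal_openin[OF quasipoint_dual_ideal] q openin_subset by blast
  then have "e ` U \<subseteq> {y \<in> topspace Y. g y \<in> {c}}"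
    using const image_e_subset[of U] by auto
  then have "Y closure_of (e ` U) \<subseteq> {y \<in> topspace Y. g y \<in> {c}}"
    by (rule closure_of_minimal) (rule closedin_continuous_map_preimage[OF g], simp)
  then show ?thesis
    using limit_point_in_closure[OF q] by blast
qed

lemma inj_on_limit_point_discrete:
  assumes discrete: "M = discrete_topology (topspace M)"
  shows "inj_on limit_point (topspace (quasipoint_space M))"
proof (rule inj_onI, rule ccontr)
  fix B1 B2 assume B: "B1 \<in> topspace (quasipoint_space M)" "B2 \<in> topspace (quasipoint_space M)"
    "limit_point B1 = limit_point B2" "B1 \<noteq> B2"
  then have q: "quasipoint M B1" "quasipoint M B2"
    by (auto simp: topspace_quasipoint_space)
  then obtain U V where UV: "U \<in> B1" "V \<in> B2" "U \<inter> V = {}"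
    using quasipoint_separation B(4) by metis
  let ?u = "\<lambda>x. if x \<in> U then 1 else (0::real)"
  have "continuous_map M euclideanreal ?u"
    by (subst discrete) (simp add: continuous_map_from_discrete_topology)
  moreover have "bounded (?u ` topspace M)"
    by (rule bounded_subset[of "{0, 1}"]) auto
  ultimately obtain g where g: "continuous_map Y euclideanreal g" "\<And>x. x \<in> topspace M \<Longrightarrow> g (e x) = ?u x"
    by (rule bounded_real_extension) blast
  have "U \<subseteq> topspace M" "V \<subseteq> topspace M"
    using UV(1,2) q dual_ideal_openin[OF quasipoint_dual_ideal] openin_subset by blast+
  have "g (limit_point B1) = 1"
    by (rule limit_point_eq_const[OF q(1) UV(1) g(1)]) (use \<open>U \<subseteq> topspace M\<close> g(2) in auto)
  moreover have "g (limit_point B2) = 0"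
    by (rule limit_point_eq_const[OF q(2) UV(2) g(1)])
      (use \<open>V \<subseteq> topspace M\<close> g(2) UV(3) in \<open>auto simp: disjoint_iff subset_iff\<close>)
  ultimately show False
    using B(3) by simp
qed

theorem homeomorphic_quasipoint_space_discrete:
  assumes "M = discrete_topology (topspace M)"
  shows "Y homeomorphic_space quasipoint_space M"
proof -
  have "homeomorphic_map (quasipoint_space M) Y limit_point"
    using continuous_imp_homeomorphic_map[OF continuous_map_limit_point compact_space_quasipoint_space
        Hausdorff_space_Y limit_point_image inj_on_limit_point_discrete[OF assms]] .
  then show ?thesis
    using homeomorphic_map_imp_homeomorphic_space homeomorphic_space_sym by blast
qed

end

text \<open>The hypotheses on \<open>M\<close> are what make a Stone-Cech compactification exist; the argument
  below only uses the defining properties of one.\<close>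

theorem corollary2p46:
  fixes M :: "'a topology"
  assumes "completely_regular_space M" and "Hausdorff_space M"
  shows "(\<forall>(Y :: 'b topology) e. stone_cech M Y e \<longrightarrow>
            Y homeomorphic_space gelfand_spectrum (Cpt M)) \<and>
         (M = discrete_topology (topspace M) \<longrightarrow>
            (\<forall>(Y :: 'b topology) e. stone_cech M Y e \<longrightarrow>
               Y homeomorphic_space quasipoint_space M))"
  using stone_cech_compactification.homeomorphic_gelfand_spectrum
    stone_cech_compactification.homeomorphic_quasipoint_space_discrete
  unfolding stone_cech_compactification_def by blast

end
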